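(* Let $C$ be a circuit over variables $x_1,\dots,x_n$ that may also contain gates computing the constants $0$ and $1$, and suppose that (as a function of $x_1,\dots,x_n$) $C$ does not imply any variable $x_i$ and is not implied by any variable $x_i$. Let $u,v$ be new variables, let $C(x_1,\dots,x_n,u,v)$ denote the circuit obtained from $C$ by replacing every constant-$1$ gate by $u$ and every constant-$0$ gate by $v$, and let $C'=t_2(u,C(x_1,\dots,x_n,u,v),v)$. Then $\{u,v\}$ is the only dominant pair for $C'$.
   Context: $t_2(x,y,z)=(x\wedge y)\vee(x\wedge z)\vee(y\wedge z)$ is the ternary majority function. A circuit $C$ implies a variable $x$ if every satisfying assignment of $C$ sets $x$ to 1; $C$ is implied by $x$ if every assignment setting $x$ to 1 satisfies $C$. A pair of two distinct variables $\{s,t\}$ is dominant for a circuit $C$ if for every $\alpha\in\{0,1\}$ and every truth assignment $I$ with $I(s)=I(t)=\alpha$, $I$ satisfies $C$ if and only if $\alpha=1$. *)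

theory Defs
  imports Main
begin

text \<open>Boolean circuits (represented as formula trees) over variables of type 'v.
  A gate applies an arbitrary Boolean function to the values of its inputs;
  constant gates compute 0 or 1.\<close>
datatype 'v circ =
    Var 'v
  | Const bool
  | Gate "bool list \<Rightarrow> bool" "'v circ list"

fun eval :: "('v \<Rightarrow> bool) \<Rightarrow> 'v circ \<Rightarrow> bool" where
  "eval I (Var x) = I x"
| "eval I (Const b) = b"
| "eval I (Gate f cs) = f (map (eval I) cs)"

fun vars :: "'v circ \<Rightarrow> 'v set" where
  "vars (Var x) = {x}"
| "vars (Const b) = {}"
| "vars (Gate f cs) = (\<Union>c\<in>set cs. vars c)"

fun subst_consts :: "'v \<Rightarrow> 'v \<Rightarrow> 'v circ \<Rightarrow> 'v circ" where
  "subst_consts u v (Var x) = Var x"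
| "subst_consts u v (Const b) = (if b then Var u else Var v)"
| "subst_consts u v (Gate f cs) = Gate f (map (subst_consts u v) cs)"

definition t2 :: "bool \<Rightarrow> bool \<Rightarrow> bool \<Rightarrow> bool" where
  "t2 x y z \<longleftrightarrow> (x \<and> y) \<or> (x \<and> z) \<or> (y \<and> z)"

definition t2_gate :: "'v circ \<Rightarrow> 'v circ \<Rightarrow> 'v circ \<Rightarrow> 'v circ" where
  "t2_gate a b c = Gate (\<lambda>bs. case bs of [x, y, z] \<Rightarrow> t2 x y z | _ \<Rightarrow> False) [a, b, c]"

definition implies_var :: "'v circ \<Rightarrow> 'v \<Rightarrow> bool" where
  "implies_var C x \<longleftrightarrow> (\<forall>I. eval I C \<longrightarrow> I x)"

definition implied_by_var :: "'v circ \<Rightarrow> 'v \<Rightarrow> bool" where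
  "implied_by_var C x \<longleftrightarrow> (\<forall>I. I x \<longrightarrow> eval I C)"

definition dominant_pair :: "'v circ \<Rightarrow> 'v \<Rightarrow> 'v \<Rightarrow> bool" where
  "dominant_pair C s t \<longleftrightarrow> s \<noteq> t \<and>
     (\<forall>\<alpha> I. I s = \<alpha> \<and> I t = \<alpha> \<longrightarrow> (eval I C \<longleftrightarrow> \<alpha>))"

end

theory Submission
  imports Defs
begin

(* The proof rests on two semantic facts.
   (1) When u and v receive the same value, the majority gate outputs that
       value whatever the middle input is; hence {u,v} is dominant for C'.
   (2) When u is true and v false, the middle input decides the output, and
       the substituted circuit then behaves exactly like C; so on assignments
       of the form J(u:=True, v:=False) the circuit C' computes C.
   Every other pair is refuted by a concrete assignment: two variables of X
   fail by setting them to 1 and u, v to 0 (the output is 0); a pair {u,x}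
   with x in X fails by an assignment with x true and C false (it exists as
   C is not implied by x) extended by (2); dually for {v,x}. *)

lemma eval_t2_gate: "eval I (t2_gate a b c) = t2 (eval I a) (eval I b) (eval I c)"
  by (simp add: t2_gate_def)

lemma eval_subst_consts:
  assumes "I u" and "\<not> I v"
  shows "eval I (subst_consts u v C) = eval I C"
proof (induction C)
  case (Gate f cs)
  then have "map (eval I) (map (subst_consts u v) cs) = map (eval I) cs" by auto
  then show ?case by (simp only: eval.simps subst_consts.simps)
qed (use assms in auto)

lemma eval_cong:
  assumes "\<forall>x\<in>vars C. I x = J x"
  shows "eval I C = eval J C"
  using assms
proof (induction C)
  case (Gate f cs)
  then have "map (eval I) cs = map (eval J) cs" by auto
  then show ?case by (simp only: eval.simps)
qed auto

lemma dominant_pair_sym: "dominant_pair C s t \<longleftrightarrow> dominant_pair C t s"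
  unfolding dominant_pair_def by blast

lemma dominant_pair_t2_outer:
  assumes "u \<noteq> v"
  shows "dominant_pair (t2_gate (Var u) D (Var v)) u v"
  using assms unfolding dominant_pair_def eval_t2_gate t2_def by auto

lemma not_dominant_pair_t2_inner:
  assumes "s \<notin> {u, v}" and "t \<notin> {u, v}"
  shows "\<not> dominant_pair (t2_gate (Var u) D (Var v)) s t"
proof
  let ?I = "(\<lambda>_. False)(s := True, t := True)"
  assume "dominant_pair (t2_gate (Var u) D (Var v)) s t"
  then have "eval ?I (t2_gate (Var u) D (Var v))"
    unfolding dominant_pair_def by auto
  moreover have "\<not> eval ?I (t2_gate (Var u) D (Var v))"
    using assms unfolding eval_t2_gate t2_def by auto
  ultimately show False by simp
qed

lemma eval_t2_subst_consts:
  assumes "u \<notin> vars C" and "v \<notin> vars C" and "u \<noteq> v"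
  shows "eval (J(u := True, v := False)) (t2_gate (Var u) (subst_consts u v C) (Var v))
         = eval J C"
proof -
  let ?I = "J(u := True, v := False)"
  have "eval ?I C = eval J C"
    using assms by (intro eval_cong) auto
  then show ?thesis
    using assms(3) unfolding eval_t2_gate t2_def by (simp add: eval_subst_consts)
qed

lemma not_dominant_pair_u:
  assumes "\<not> implied_by_var C x" and "x \<notin> {u, v}"
    and "u \<notin> vars C" and "v \<notin> vars C" and "u \<noteq> v"
  shows "\<not> dominant_pair (t2_gate (Var u) (subst_consts u v C) (Var v)) u x"
proof
  assume dom: "dominant_pair (t2_gate (Var u) (subst_consts u v C) (Var v)) u x"
  obtain J where "J x" and C_false: "\<not> eval J C"
    using assms(1) unfolding implied_by_var_def by auto
  let ?I = "J(u := True, v := False)"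
  have "?I u" and "?I x" using \<open>J x\<close> assms(2,5) by auto
  then have "eval ?I (t2_gate (Var u) (subst_consts u v C) (Var v))"
    using dom unfolding dominant_pair_def by blast
  with C_false show False
    using eval_t2_subst_consts[OF assms(3-5)] by simp
qed

lemma not_dominant_pair_v:
  assumes "\<not> implies_var C x" and "x \<notin> {u, v}"
    and "u \<notin> vars C" and "v \<notin> vars C" and "u \<noteq> v"
  shows "\<not> dominant_pair (t2_gate (Var u) (subst_consts u v C) (Var v)) v x"
proof
  assume dom: "dominant_pair (t2_gate (Var u) (subst_consts u v C) (Var v)) v x"
  obtain J where "\<not> J x" and C_true: "eval J C"
    using assms(1) unfolding implies_var_def by auto
  let ?I = "J(u := True, v := False)"
  have "\<not> ?I v" and "\<not> ?I x" using \<open>\<not> J x\<close> assms(2,5) by auto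
  then have "\<not> eval ?I (t2_gate (Var u) (subst_consts u v C) (Var v))"
    using dom unfolding dominant_pair_def by blast
  with C_true show False
    using eval_t2_subst_consts[OF assms(3-5)] by simp
qed

lemma not_dominant_pair_meeting_X:
  assumes "vars C \<subseteq> X" and "u \<notin> X" and "v \<notin> X" and "u \<noteq> v"
    and nondegenerate: "\<forall>x\<in>X. \<not> implies_var C x \<and> \<not> implied_by_var C x"
    and "x \<in> X" and "y \<in> X \<union> {u, v}"
  shows "\<not> dominant_pair (t2_gate (Var u) (subst_consts u v C) (Var v)) x y"
proof -
  have uv_fresh: "u \<notin> vars C" "v \<notin> vars C" and x_new: "x \<notin> {u, v}"
    using assms(1-3,6) by auto
  consider "y \<in> X" | "y = u" | "y = v" using assms(7) by blast
  then show ?thesis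
  proof cases
    case 1
    then show ?thesis using x_new assms(2,3) by (intro not_dominant_pair_t2_inner) auto
  next
    case 2
    have "\<not> dominant_pair (t2_gate (Var u) (subst_consts u v C) (Var v)) u x"
      using nondegenerate assms(6) by (intro not_dominant_pair_u[OF _ x_new uv_fresh assms(4)]) simp
    with 2 show ?thesis by (metis dominant_pair_sym)
  next
    case 3
    have "\<not> dominant_pair (t2_gate (Var u) (subst_consts u v C) (Var v)) v x"
      using nondegenerate assms(6) by (intro not_dominant_pair_v[OF _ x_new uv_fresh assms(4)]) simp
    with 3 show ?thesis by (metis dominant_pair_sym)
  qed
qed

theorem lemma4p10:
  fixes C :: "'v circ" and X :: "'v set" and u v :: 'v
  assumes "finite X"
    and "vars C \<subseteq> X"
    and "u \<notin> X" and "v \<notin> X" and "u \<noteq> v"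
    and "\<forall>x\<in>X. \<not> implies_var C x \<and> \<not> implied_by_var C x"
  shows "\<forall>s\<in>X \<union> {u, v}. \<forall>t\<in>X \<union> {u, v}.
           dominant_pair (t2_gate (Var u) (subst_consts u v C) (Var v)) s t \<longleftrightarrow> {s, t} = {u, v}"
proof (intro ballI)
  fix s t assume s: "s \<in> X \<union> {u, v}" and t: "t \<in> X \<union> {u, v}"
  let ?C' = "t2_gate (Var u) (subst_consts u v C) (Var v)"
  show "dominant_pair ?C' s t \<longleftrightarrow> {s, t} = {u, v}"
  proof (cases "s \<in> X \<or> t \<in> X")
    case True
    then have "\<not> dominant_pair ?C' s t"
    proof
      assume "s \<in> X"
      then show ?thesis using not_dominant_pair_meeting_X[OF assms(2-6) _ t] by blast
    next
      assume "t \<in> X"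
      then show ?thesis
        using not_dominant_pair_meeting_X[OF assms(2-6) _ s] by (metis dominant_pair_sym)
    qed
    moreover have "{s, t} \<noteq> {u, v}" using True assms(3,4) by auto
    ultimately show ?thesis by simp
  next
    case False
    then have "s \<in> {u, v}" and "t \<in> {u, v}" using s t by auto
    then consider "s = t" | "s = u \<and> t = v" | "s = v \<and> t = u" by blast
    then show ?thesis
    proof cases
      case 1
      then show ?thesis using assms(5) by (auto simp: dominant_pair_def doubleton_eq_iff)
    next
      case 2
      then show ?thesis using dominant_pair_t2_outer[OF assms(5)] by simp
    next
      case 3
      then show ?thesis
        using dominant_pair_t2_outer[OF assms(5)] by (auto simp: dominant_pair_sym)
    qed
  qed
qed

end
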